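(* For each $n\in\mathbb{N}_+$ fix integers $2\le d_{n,1}\le\cdots\le d_{n,n}$. For each $n$ let $X^{(n,1)},\ldots,X^{(n,n)}$ be independent random variables with $X^{(n,i)}$ uniformly distributed on $\{0,1,\ldots,d_{n,i}-1\}$, and set $X^{(n)}=\sum_{i=1}^n X^{(n,i)}$. Then $X^{(n)}$ satisfies the CLT if and only if it satisfies the maximum condition.
   Context: The maximum condition means $\max_i \mathbb{V}(X^{(n,i)})/\mathbb{V}(X^{(n)})\to0$ as $n\to\infty$. A sequence $X^{(n)}$ satisfies the CLT if $(X^{(n)}-\mathbb{E}X^{(n)})/\sqrt{\mathbb{V}X^{(n)}}$ converges in distribution to $N(0,1)$. *)

theory Defs
  imports "HOL-Probability.Probability"
begin

definition satisfies_CLT :: "(nat \<Rightarrow> 'a measure) \<Rightarrow> (nat \<Rightarrow> 'a \<Rightarrow> real) \<Rightarrow> bool" where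
  "satisfies_CLT M Y \<longleftrightarrow>
     weak_conv_m
       (\<lambda>n. distr (M n) borel
          (\<lambda>\<omega>. (Y n \<omega> - prob_space.expectation (M n) (Y n))
                 / sqrt (prob_space.variance (M n) (Y n))))
       std_normal_distribution"

definition maximum_condition :: "(nat \<Rightarrow> 'a measure) \<Rightarrow> (nat \<Rightarrow> nat \<Rightarrow> 'a \<Rightarrow> real) \<Rightarrow> bool" where
  "maximum_condition M X \<longleftrightarrow>
     (\<lambda>n. (MAX i\<in>{1..n}. prob_space.variance (M n) (X n i))
            / prob_space.variance (M n) (\<lambda>\<omega>. \<Sum>i\<in>{1..n}. X n i \<omega>)) \<longlonglongrightarrow> 0"

end

theory Submission
  imports Defs
begin

(* The standardized row sum has as characteristic function the product of the characteristic
   functions of the centred uniform laws on {0, ..., d - 1}, evaluated at t / sigma, where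
   sigma^2 = sum_i (d_i^2 - 1) / 12. If the largest variance is negligible compared to sigma^2,
   Lindeberg's comparison of every factor with exp (- t^2 v_i / (2 sigma^2)) yields the limit
   exp (- t^2 / 2). Conversely, if along a subsequence the ratio of the largest variance to
   sigma^2 tends to c > 0, then at t = 2 pi / sqrt (12 c) the largest factor, a normalised
   geometric sum of d roots of unity turning almost exactly once around the circle, tends to 0,
   whereas the Gaussian limit does not vanish. Levy's continuity theorem translates both
   directions into statements about weak convergence. *)

section \<open>Discrete uniform distribution\<close>

definition uniform_mean :: "int \<Rightarrow> real" where
  "uniform_mean D = (real_of_int D - 1) / 2"

definition uniform_variance :: "int \<Rightarrow> real" where
  "uniform_variance D = ((real_of_int D)\<^sup>2 - 1) / 12"

lemma uniform_variance_mono: "0 \<le> D \<Longrightarrow> D \<le> E \<Longrightarrow> uniform_variance D \<le> uniform_variance E"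
  unfolding uniform_variance_def by (auto intro!: divide_right_mono power_mono)

lemma uniform_variance_ge: "2 \<le> D \<Longrightarrow> 1/4 \<le> uniform_variance D"
proof -
  assume "2 \<le> D"
  then have "(2::real)\<^sup>2 \<le> (real_of_int D)\<^sup>2" by (intro power_mono) auto
  then show ?thesis unfolding uniform_variance_def by simp
qed

lemma sum_atLeastLessThan_of_nat: "(\<Sum>k\<in>{0..<int N}. g k) = (\<Sum>j<N. g (int j))"
proof -
  have "{0..<int N} = int ` {..<N}"
    using image_int_atLeastLessThan[of 0 N] by (simp add: lessThan_atLeast0)
  then show ?thesis by (simp add: sum.reindex)
qed

lemma sum_lessThan_real: "(\<Sum>j<N. real j) = real N * (real N - 1) / 2"
  by (induction N) (auto simp: field_simps)

lemma sum_lessThan_real_squared: "(\<Sum>j<N. (real j)\<^sup>2) = (real N - 1) * real N * (2 * real N - 1) / 6"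
  by (induction N) (auto simp: field_simps power2_eq_square)

lemma sum_centred_range:
  assumes "0 \<le> D"
  shows "(\<Sum>k\<in>{0..<D}. real_of_int k - uniform_mean D) = 0"
proof -
  obtain N where D: "D = int N" using assms by (metis nonneg_int_cases)
  have "(\<Sum>j<N. real j - (real N - 1) / 2) = (\<Sum>j<N. real j) - real N * ((real N - 1) / 2)"
    by (simp add: sum_subtractf)
  then show ?thesis unfolding D uniform_mean_def sum_atLeastLessThan_of_nat
    by (simp add: sum_lessThan_real field_simps)
qed

lemma sum_centred_range_squared:
  assumes "0 \<le> D"
  shows "(\<Sum>k\<in>{0..<D}. (real_of_int k - uniform_mean D)\<^sup>2) = real_of_int D * uniform_variance D"
proof -
  obtain N where D: "D = int N" using assms by (metis nonneg_int_cases)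
  have "(\<Sum>j<N. (real j - (real N - 1) / 2)\<^sup>2)
      = (\<Sum>j<N. (real j)\<^sup>2 - (real N - 1) * real j + ((real N - 1) / 2)\<^sup>2)"
    by (intro sum.cong) (auto simp: power2_eq_square field_simps)
  also have "\<dots> = (\<Sum>j<N. (real j)\<^sup>2) - (real N - 1) * (\<Sum>j<N. real j) + real N * ((real N - 1) / 2)\<^sup>2"
    by (simp add: sum.distrib sum_subtractf sum_distrib_left)
  also have "\<dots> = real N * (((real N)\<^sup>2 - 1) / 12)"
    by (simp only: sum_lessThan_real sum_lessThan_real_squared) (simp add: field_simps power2_eq_square)
  finally show ?thesis
    unfolding D uniform_mean_def uniform_variance_def sum_atLeastLessThan_of_nat by simp
qed

lemma abs_centred_range_le:
  assumes "k \<in> {0..<D}"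
  shows "\<bar>real_of_int k - uniform_mean D\<bar> \<le> real_of_int D / 2"
  using assms unfolding uniform_mean_def by (auto simp: abs_le_iff field_simps)

definition char_centred_uniform :: "int \<Rightarrow> real \<Rightarrow> complex" where
  "char_centred_uniform D s =
     inverse (real_of_int D) *\<^sub>R (\<Sum>k\<in>{0..<D}. iexp (s * (real_of_int k - uniform_mean D)))"

section \<open>Rows of independent uniform variables\<close>

locale uniform_row = prob_space +
  fixes X :: "nat \<Rightarrow> 'a \<Rightarrow> int" and d :: "nat \<Rightarrow> int" and n :: nat
  assumes indep: "indep_vars (\<lambda>_. count_space UNIV) X {1..n}"
    and uniform: "\<And>i. i \<in> {1..n} \<Longrightarrow>
          distr M (count_space UNIV) (X i) = measure_pmf (pmf_of_set {0..<d i})"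
    and range_pos: "\<And>i. i \<in> {1..n} \<Longrightarrow> 1 \<le> d i"
begin

abbreviation row_sum :: "'a \<Rightarrow> real" where
  "row_sum \<equiv> \<lambda>\<omega>. \<Sum>i\<in>{1..n}. real_of_int (X i \<omega>)"

definition centred :: "nat \<Rightarrow> 'a \<Rightarrow> real" where
  "centred i \<omega> = real_of_int (X i \<omega>) - uniform_mean (d i)"

lemma measurable_X: "i \<in> {1..n} \<Longrightarrow> X i \<in> M \<rightarrow>\<^sub>M count_space UNIV"
  using indep unfolding indep_vars_def2 by auto

lemma integral_uniform:
  fixes f :: "int \<Rightarrow> 'b::{banach, second_countable_topology}"
  assumes i: "i \<in> {1..n}"
  shows "integral\<^sup>L M (\<lambda>\<omega>. f (X i \<omega>)) = inverse (real_of_int (d i)) *\<^sub>R (\<Sum>k\<in>{0..<d i}. f k)"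
proof -
  have "integral\<^sup>L M (\<lambda>\<omega>. f (X i \<omega>)) = integral\<^sup>L (distr M (count_space UNIV) (X i)) f"
    using measurable_X[OF i] by (intro integral_distr[symmetric]) auto
  also have "\<dots> = (\<Sum>k\<in>{0..<d i}. pmf (pmf_of_set {0..<d i}) k *\<^sub>R f k)"
    unfolding uniform[OF i] using range_pos[OF i] by (intro integral_measure_pmf) auto
  finally show ?thesis
    using range_pos[OF i] by (simp add: scaleR_sum_right divide_inverse)
qed

lemma integrable_uniform:
  fixes f :: "int \<Rightarrow> 'b::{banach, second_countable_topology}"
  assumes i: "i \<in> {1..n}"
  shows "integrable M (\<lambda>\<omega>. f (X i \<omega>))"
proof -
  have "integrable (distr M (count_space UNIV) (X i)) f"
    unfolding uniform[OF i] using range_pos[OF i] by (intro integrable_measure_pmf_finite) auto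
  then show ?thesis using measurable_X[OF i] by (subst (asm) integrable_distr_eq) auto
qed

lemma integrable_centred: "i \<in> {1..n} \<Longrightarrow> integrable M (centred i)"
  using integrable_uniform[of i "\<lambda>k. real_of_int k - uniform_mean (d i)"] unfolding centred_def .

lemma integrable_centred_squared: "i \<in> {1..n} \<Longrightarrow> integrable M (\<lambda>\<omega>. (centred i \<omega>)\<^sup>2)"
  using integrable_uniform[of i "\<lambda>k. (real_of_int k - uniform_mean (d i))\<^sup>2"] unfolding centred_def .

lemma expectation_centred: "i \<in> {1..n} \<Longrightarrow> expectation (centred i) = 0"
  using integral_uniform[of i "\<lambda>k. real_of_int k - uniform_mean (d i)"] sum_centred_range[of "d i"]
    range_pos[of i]
  unfolding centred_def by simp

lemma expectation_centred_squared:
  assumes i: "i \<in> {1..n}"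
  shows "expectation (\<lambda>\<omega>. (centred i \<omega>)\<^sup>2) = uniform_variance (d i)"
  using integral_uniform[OF i, of "\<lambda>k. (real_of_int k - uniform_mean (d i))\<^sup>2"]
    sum_centred_range_squared[of "d i"] range_pos[OF i]
  unfolding centred_def by simp

lemma expectation_X: "i \<in> {1..n} \<Longrightarrow> expectation (\<lambda>\<omega>. real_of_int (X i \<omega>)) = uniform_mean (d i)"
proof -
  assume i: "i \<in> {1..n}"
  have "(\<lambda>\<omega>. real_of_int (X i \<omega>)) = (\<lambda>\<omega>. centred i \<omega> + uniform_mean (d i))"
    by (simp add: centred_def)
  then show ?thesis
    using integrable_centred[OF i] expectation_centred[OF i] by (simp add: prob_space)
qed

lemma variance_X: "i \<in> {1..n} \<Longrightarrow> variance (\<lambda>\<omega>. real_of_int (X i \<omega>)) = uniform_variance (d i)"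
  using expectation_centred_squared[of i] expectation_X[of i] unfolding centred_def by simp

lemma indep_centred: "indep_vars (\<lambda>_. borel) centred {1..n}"
  unfolding centred_def by (rule indep_vars_compose2[OF indep]) auto

lemma moments_centred_sum:
  assumes "I \<subseteq> {1..n}"
  shows "integrable M (\<lambda>\<omega>. \<Sum>i\<in>I. centred i \<omega>) \<and> expectation (\<lambda>\<omega>. \<Sum>i\<in>I. centred i \<omega>) = 0 \<and>
    integrable M (\<lambda>\<omega>. (\<Sum>i\<in>I. centred i \<omega>)\<^sup>2) \<and>
    expectation (\<lambda>\<omega>. (\<Sum>i\<in>I. centred i \<omega>)\<^sup>2) = (\<Sum>i\<in>I. uniform_variance (d i))"
  using assms
proof (induction I rule: infinite_finite_induct)
  case (infinite A)
  then show ?case using finite_subset[of A "{1..n}"] by auto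
next
  case empty
  then show ?case by (simp add: prob_space)
next
  case (insert j F)
  let ?T = "\<lambda>\<omega>. \<Sum>i\<in>F. centred i \<omega>"
  have j: "j \<in> {1..n}" using insert by auto
  note IH = insert.IH[OF subset_trans[OF subset_insertI insert.prems]]
  have "indep_var borel (centred j) borel ?T"
    using indep_vars_subset[OF indep_centred insert.prems] insert.hyps
    by (intro indep_vars_sum) auto
  from indep_var_integrable[OF this integrable_centred[OF j]]
    indep_var_lebesgue_integral[OF this integrable_centred[OF j]]
  have cross: "integrable M (\<lambda>\<omega>. centred j \<omega> * ?T \<omega>)"
      "expectation (\<lambda>\<omega>. centred j \<omega> * ?T \<omega>) = 0"
    using IH expectation_centred[OF j] by auto
  have "(\<lambda>\<omega>. (\<Sum>i\<in>insert j F. centred i \<omega>)\<^sup>2)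
      = (\<lambda>\<omega>. (centred j \<omega>)\<^sup>2 + 2 * (centred j \<omega> * ?T \<omega>) + (?T \<omega>)\<^sup>2)"
    using insert.hyps by (auto simp: power2_eq_square field_simps)
  moreover have "(\<lambda>\<omega>. \<Sum>i\<in>insert j F. centred i \<omega>) = (\<lambda>\<omega>. centred j \<omega> + ?T \<omega>)"
    using insert.hyps by auto
  ultimately show ?case
    using IH cross integrable_centred[OF j] integrable_centred_squared[OF j]
      expectation_centred[OF j] expectation_centred_squared[OF j] insert.hyps
    by (simp add: Bochner_Integration.integral_add)
qed

lemma row_sum_eq: "row_sum \<omega> = (\<Sum>i\<in>{1..n}. centred i \<omega>) + (\<Sum>i\<in>{1..n}. uniform_mean (d i))"
  unfolding centred_def by (simp add: sum_subtractf)

lemma variance_row_sum: "variance row_sum = (\<Sum>i\<in>{1..n}. uniform_variance (d i))"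
  using moments_centred_sum[of "{1..n}"]
  unfolding row_sum_eq by (simp add: Bochner_Integration.integral_add prob_space)

lemma standardized_row_sum_eq:
  "(\<lambda>\<omega>. (row_sum \<omega> - expectation row_sum) / sqrt (variance row_sum))
     = (\<lambda>\<omega>. \<Sum>i\<in>{1..n}. centred i \<omega> / sqrt (\<Sum>i\<in>{1..n}. uniform_variance (d i)))"
  using moments_centred_sum[of "{1..n}"]
  unfolding variance_row_sum row_sum_eq
  by (simp add: Bochner_Integration.integral_add prob_space sum_divide_distrib)

lemma char_standardized_row_sum:
  defines "V \<equiv> \<Sum>i\<in>{1..n}. uniform_variance (d i)"
  shows "char (distr M borel (\<lambda>\<omega>. (row_sum \<omega> - expectation row_sum) / sqrt (variance row_sum))) t
     = (\<Prod>i\<in>{1..n}. char_centred_uniform (d i) (t / sqrt V))"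
proof -
  have "indep_vars (\<lambda>_. borel) (\<lambda>i \<omega>. centred i \<omega> / sqrt V) {1..n}"
    by (rule indep_vars_compose2[OF indep_centred, where Y="\<lambda>i x. x / sqrt V"]) auto
  then have "char (distr M borel (\<lambda>\<omega>. \<Sum>i\<in>{1..n}. centred i \<omega> / sqrt V)) t
      = (\<Prod>i\<in>{1..n}. char (distr M borel (\<lambda>\<omega>. centred i \<omega> / sqrt V)) t)"
    by (rule char_distr_sum)
  also have "\<dots> = (\<Prod>i\<in>{1..n}. char_centred_uniform (d i) (t / sqrt V))"
  proof (rule prod.cong[OF refl])
    fix i assume i: "i \<in> {1..n}"
    have [measurable]: "centred i \<in> borel_measurable M"
      using integrable_centred[OF i] by auto
    have "char (distr M borel (\<lambda>\<omega>. centred i \<omega> / sqrt V)) t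
        = integral\<^sup>L M (\<lambda>\<omega>. iexp (t * (centred i \<omega> / sqrt V)))"
      unfolding char_def by (subst integral_distr) auto
    also have "\<dots> = integral\<^sup>L M (\<lambda>\<omega>. iexp (t / sqrt V * (real_of_int (X i \<omega>) - uniform_mean (d i))))"
      by (simp add: centred_def)
    also have "\<dots> = char_centred_uniform (d i) (t / sqrt V)"
      unfolding char_centred_uniform_def by (rule integral_uniform[OF i])
    finally show "char (distr M borel (\<lambda>\<omega>. centred i \<omega> / sqrt V)) t = char_centred_uniform (d i) (t / sqrt V)" .
  qed
  finally show ?thesis unfolding standardized_row_sum_eq V_def .
qed

lemma real_distribution_standardized_row_sum:
  "real_distribution (distr M borel (\<lambda>\<omega>. (row_sum \<omega> - expectation row_sum) / sqrt (variance row_sum)))"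
proof -
  have "row_sum \<in> borel_measurable M"
    using measurable_X by (intro borel_measurable_sum) auto
  then show ?thesis by (intro real_distribution_distr) auto
qed

lemma Max_variance_X:
  assumes "1 \<le> n" "\<And>i. i \<in> {1..n} \<Longrightarrow> d i \<le> d n"
  shows "(MAX i\<in>{1..n}. variance (\<lambda>\<omega>. real_of_int (X i \<omega>))) = uniform_variance (d n)"
proof -
  have "(\<lambda>i. variance (\<lambda>\<omega>. real_of_int (X i \<omega>))) ` {1..n} = (\<lambda>i. uniform_variance (d i)) ` {1..n}"
    using variance_X by (intro image_cong) auto
  moreover have "Max ((\<lambda>i. uniform_variance (d i)) ` {1..n}) = uniform_variance (d n)"
    using assms range_pos by (intro Max_eqI) (auto intro!: uniform_variance_mono order_trans[OF zero_le_one])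
  ultimately show ?thesis by simp
qed

end

section \<open>Estimates for the characteristic function\<close>

lemma norm_iexp_minus_linear: "cmod (iexp x - (1 + \<i> * complex_of_real x)) \<le> x\<^sup>2 / 2"
proof -
  have "(\<Sum>k\<le>1. (\<i> * complex_of_real x)^k / fact k) = 1 + \<i> * complex_of_real x"
    by simp
  then show ?thesis using iexp_approx1[of x 1] by (simp add: eval_nat_numeral)
qed

lemma norm_iexp_minus_quadratic:
  "cmod (iexp x - (complex_of_real (1 - x\<^sup>2 / 2) + \<i> * complex_of_real x)) \<le> \<bar>x\<bar>^3 / 6"
proof -
  have "(\<Sum>k\<le>2. (\<i> * complex_of_real x)^k / fact k) = complex_of_real (1 - x\<^sup>2 / 2) + \<i> * complex_of_real x"
    by (simp add: eval_nat_numeral complex_eq_iff power2_eq_square)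
  moreover have "(fact (Suc 2) :: real) = 6" by (simp add: eval_nat_numeral)
  ultimately show ?thesis using iexp_approx1[of x 2] by simp
qed

lemma abs_le_two_norm_one_minus_iexp:
  assumes "\<bar>s\<bar> \<le> 1"
  shows "\<bar>s\<bar> \<le> 2 * cmod (1 - iexp s)"
proof -
  have "s\<^sup>2 = \<bar>s\<bar> * \<bar>s\<bar>" by (simp add: power2_eq_square)
  also have "\<dots> \<le> \<bar>s\<bar>" using assms by (metis abs_ge_zero mult_left_le_one_le)
  finally have sq: "s\<^sup>2 \<le> \<bar>s\<bar>" .
  have "\<bar>s\<bar> = cmod ((iexp s - 1) - (iexp s - (1 + \<i> * complex_of_real s)))"
    by (simp add: norm_mult)
  also have "\<dots> \<le> cmod (iexp s - 1) + cmod (iexp s - (1 + \<i> * complex_of_real s))"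
    by (rule norm_triangle_ineq4)
  also have "\<dots> \<le> cmod (1 - iexp s) + s\<^sup>2 / 2"
    using norm_iexp_minus_linear[of s] by (simp add: norm_minus_commute)
  finally show ?thesis using sq by simp
qed

lemma abs_one_minus_minus_exp_le:
  fixes a :: real
  assumes "0 \<le> a" "a \<le> 1"
  shows "\<bar>1 - a - exp (-a)\<bar> \<le> a\<^sup>2"
proof -
  have "(1 - a + a\<^sup>2) * (1 + a + a\<^sup>2 / 2) = 1 + a\<^sup>2 / 2 + a^3 / 2 + a^4 / 2"
    by (simp add: power2_eq_square power3_eq_cube power4_eq_xxxx field_simps)
  with assms have "1 \<le> (1 - a + a\<^sup>2) * (1 + a + a\<^sup>2 / 2)" by simp
  also have "\<dots> \<le> (1 - a + a\<^sup>2) * exp a"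
    using assms exp_lower_Taylor_quadratic[of a] by (intro mult_left_mono) auto
  finally have "exp (-a) \<le> 1 - a + a\<^sup>2"
    by (simp add: exp_minus field_simps)
  moreover have "1 - a \<le> exp (-a)" using exp_ge_add_one_self[of "-a"] by simp
  ultimately show ?thesis by simp
qed

lemma norm_char_centred_uniform_le_1:
  assumes "1 \<le> D"
  shows "norm (char_centred_uniform D s) \<le> 1"
proof -
  define f where "f k = iexp (s * (real_of_int k - uniform_mean D))" for k
  have "norm (char_centred_uniform D s) = inverse (real_of_int D) * norm (\<Sum>k\<in>{0..<D}. f k)"
    unfolding char_centred_uniform_def f_def[symmetric] using assms by simp
  also have "\<dots> \<le> inverse (real_of_int D) * (\<Sum>k\<in>{0..<D}. norm (f k))"
    using assms by (intro mult_left_mono norm_sum) auto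
  also have "\<dots> = inverse (real_of_int D) * real (card {0..<D})"
    unfolding f_def by (simp del: of_real_mult of_real_diff)
  also have "\<dots> = 1" using assms by simp
  finally show ?thesis .
qed

lemma char_centred_uniform_quadratic_approx:
  assumes D: "1 \<le> D"
  shows "norm (char_centred_uniform D s - complex_of_real (1 - s\<^sup>2 * uniform_variance D / 2))
     \<le> \<bar>s\<bar>^3 * real_of_int D * uniform_variance D / 12"
proof -
  define y where "y k = real_of_int k - uniform_mean D" for k
  define T where "T k = complex_of_real (1 - (s * y k)\<^sup>2 / 2) + \<i> * complex_of_real (s * y k)" for k
  have Dpos: "real_of_int D > 0" using D by simp
  have sum_y: "(\<Sum>k\<in>{0..<D}. y k) = 0" and sum_y2: "(\<Sum>k\<in>{0..<D}. (y k)\<^sup>2) = real_of_int D * uniform_variance D"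
    unfolding y_def using sum_centred_range sum_centred_range_squared D by simp_all
  \<comment> \<open>the linear Taylor term averages out since the first moment vanishes\<close>
  have "inverse (real_of_int D) *\<^sub>R (\<Sum>k\<in>{0..<D}. T k) = complex_of_real (1 - s\<^sup>2 * uniform_variance D / 2)"
  proof -
    have "(\<Sum>k\<in>{0..<D}. T k) = complex_of_real (real_of_int D - s\<^sup>2 / 2 * (\<Sum>k\<in>{0..<D}. (y k)\<^sup>2))
        + \<i> * complex_of_real (s * (\<Sum>k\<in>{0..<D}. y k))"
      unfolding T_def using D
      by (simp add: sum.distrib sum_distrib_left sum_subtractf power_mult_distrib sum_divide_distrib)
    then show ?thesis unfolding sum_y sum_y2 using Dpos by (simp add: scaleR_conv_of_real field_simps)
  qed
  then have "char_centred_uniform D s - complex_of_real (1 - s\<^sup>2 * uniform_variance D / 2)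
      = inverse (real_of_int D) *\<^sub>R (\<Sum>k\<in>{0..<D}. iexp (s * y k) - T k)"
    unfolding char_centred_uniform_def y_def by (simp add: sum_subtractf scaleR_diff_right)
  also have "norm \<dots> \<le> inverse (real_of_int D) * (\<Sum>k\<in>{0..<D}. \<bar>s * y k\<bar>^3 / 6)"
    using Dpos
    by (auto intro!: mult_left_mono sum_norm_le order_trans[OF _ norm_iexp_minus_quadratic] simp: T_def)
  also have "\<dots> \<le> inverse (real_of_int D) * (\<Sum>k\<in>{0..<D}. \<bar>s\<bar>^3 * (real_of_int D / 2) * (y k)\<^sup>2 / 6)"
  proof (intro mult_left_mono sum_mono)
    fix k assume "k \<in> {0..<D}"
    then have "\<bar>y k\<bar> * (y k)\<^sup>2 \<le> (real_of_int D / 2) * (y k)\<^sup>2"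
      unfolding y_def by (intro mult_right_mono abs_centred_range_le) auto
    then have "\<bar>s\<bar>^3 * (\<bar>y k\<bar> * (y k)\<^sup>2) \<le> \<bar>s\<bar>^3 * ((real_of_int D / 2) * (y k)\<^sup>2)"
      by (rule mult_left_mono) simp
    moreover have "\<bar>s * y k\<bar>^3 = \<bar>s\<bar>^3 * (\<bar>y k\<bar> * (y k)\<^sup>2)"
    proof -
      have "\<bar>s * y k\<bar>^3 = \<bar>s\<bar>^3 * \<bar>y k\<bar>^3" by (simp add: abs_mult power_mult_distrib)
      also have "\<bar>y k\<bar>^3 = \<bar>y k\<bar> * \<bar>y k\<bar>\<^sup>2" by (simp add: power3_eq_cube power2_eq_square)
      finally show ?thesis by simp
    qed
    ultimately show "\<bar>s * y k\<bar>^3 / 6 \<le> \<bar>s\<bar>^3 * (real_of_int D / 2) * (y k)\<^sup>2 / 6"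
      by (simp add: mult_ac)
  qed (use Dpos in auto)
  also have "\<dots> = \<bar>s\<bar>^3 * real_of_int D * uniform_variance D / 12"
    using Dpos by (simp add: sum_distrib_left[symmetric] sum_divide_distrib[symmetric] sum_y2 field_simps)
  finally show ?thesis .
qed

text \<open>Summing the geometric series: the factor is small once D s is close to a nonzero
  multiple of 2 pi.\<close>
lemma norm_char_centred_uniform_le:
  assumes D: "1 \<le> D" and s: "s \<noteq> 0" "\<bar>s\<bar> \<le> 1"
  shows "norm (char_centred_uniform D s) \<le> 2 * cmod (1 - iexp (real_of_int D * s)) / (real_of_int D * \<bar>s\<bar>)"
proof -
  obtain N where N: "D = int N" using D by (metis nonneg_int_cases order_trans zero_le_one)
  define z where "z = iexp s"
  have s_le: "\<bar>s\<bar> \<le> 2 * cmod (1 - z)"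
    unfolding z_def using s(2) by (rule abs_le_two_norm_one_minus_iexp)
  then have "z \<noteq> 1" using s by auto
  have "(\<Sum>k\<in>{0..<D}. iexp (s * (real_of_int k - uniform_mean D)))
       = iexp (- s * ((real N - 1) / 2)) * (\<Sum>j<N. z^j)"
    unfolding N sum_atLeastLessThan_of_nat z_def uniform_mean_def sum_distrib_left
    by (intro sum.cong refl) (simp add: exp_add[symmetric] exp_of_nat_mult[symmetric] field_simps)
  then have "norm (char_centred_uniform D s) = inverse (real N) * (cmod (1 - z^N) / cmod (1 - z))"
    unfolding char_centred_uniform_def N using \<open>z \<noteq> 1\<close>
    by (simp add: sum_gp_strict norm_mult norm_divide)
  also have "\<dots> \<le> inverse (real N) * (cmod (1 - z^N) / (\<bar>s\<bar> / 2))"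
    using s s_le by (intro divide_left_mono mult_left_mono mult_pos_pos) auto
  also have "\<dots> = 2 * cmod (1 - z^N) / (real N * \<bar>s\<bar>)"
    using N D by (simp add: field_simps)
  also have "z^N = iexp (real_of_int D * s)"
    unfolding z_def N by (simp add: exp_of_nat_mult[symmetric] algebra_simps)
  finally show ?thesis unfolding N by simp
qed

lemma norm_prod_le_norm_factor:
  fixes z :: "'i \<Rightarrow> 'b::{comm_semiring_1,real_normed_div_algebra}"
  assumes "finite A" "j \<in> A" "\<And>i. i \<in> A \<Longrightarrow> norm (z i) \<le> 1"
  shows "norm (\<Prod>i\<in>A. z i) \<le> norm (z j)"
proof -
  have "norm (\<Prod>i\<in>A. z i) = (\<Prod>i\<in>A. norm (z i))" by (simp add: prod_norm)
  also have "\<dots> = norm (z j) * (\<Prod>i\<in>A - {j}. norm (z i))"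
    using assms by (simp add: prod.remove)
  also have "\<dots> \<le> norm (z j)"
    using assms by (intro mult_left_le prod_le_1) auto
  finally show ?thesis .
qed

lemma abs_prod_one_minus_minus_exp_sum_le:
  fixes a :: "'i \<Rightarrow> real"
  assumes "finite A" "\<And>i. i \<in> A \<Longrightarrow> 0 \<le> a i \<and> a i \<le> b" "b \<le> 1"
  shows "\<bar>(\<Prod>i\<in>A. 1 - a i) - exp (- (\<Sum>i\<in>A. a i))\<bar> \<le> b * (\<Sum>i\<in>A. a i)"
proof -
  have "exp (- (\<Sum>i\<in>A. a i)) = (\<Prod>i\<in>A. exp (- a i))"
    using assms by (simp add: exp_sum[symmetric] sum_negf)
  moreover have "norm ((\<Prod>i\<in>A. 1 - a i) - (\<Prod>i\<in>A. exp (- a i))) \<le> (\<Sum>i\<in>A. norm (1 - a i - exp (- a i)))"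
  proof (rule norm_prod_diff)
    fix i assume "i \<in> A"
    then have "0 \<le> a i" "a i \<le> 1" using assms(2,3) by force+
    then show "norm (1 - a i) \<le> 1" "norm (exp (- a i)) \<le> 1" by auto
  qed
  ultimately have "\<bar>(\<Prod>i\<in>A. 1 - a i) - exp (- (\<Sum>i\<in>A. a i))\<bar> \<le> (\<Sum>i\<in>A. \<bar>1 - a i - exp (- a i)\<bar>)"
    by simp
  also have "\<dots> \<le> (\<Sum>i\<in>A. b * a i)"
  proof (rule sum_mono)
    fix i assume "i \<in> A"
    then have a: "0 \<le> a i" "a i \<le> b" "a i \<le> 1" using assms(2,3) by force+
    then have "\<bar>1 - a i - exp (- a i)\<bar> \<le> a i * a i"
      using abs_one_minus_minus_exp_le[of "a i"] by (simp add: power2_eq_square)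
    also have "\<dots> \<le> b * a i" using a by (simp add: mult_right_mono)
    finally show "\<bar>1 - a i - exp (- a i)\<bar> \<le> b * a i" .
  qed
  finally show ?thesis by (simp add: sum_distrib_left)
qed

lemma norm_prod_char_centred_uniform_approx:
  assumes "finite A" "\<And>i. i \<in> A \<Longrightarrow> 1 \<le> e i \<and> e i \<le> E"
    and "\<And>i. i \<in> A \<Longrightarrow> s\<^sup>2 * uniform_variance (e i) \<le> 2"
  shows "norm ((\<Prod>i\<in>A. char_centred_uniform (e i) s)
      - (\<Prod>i\<in>A. complex_of_real (1 - s\<^sup>2 * uniform_variance (e i) / 2)))
    \<le> \<bar>s\<bar>^3 * real_of_int E * (\<Sum>i\<in>A. uniform_variance (e i)) / 12"
proof -
  have var_nonneg: "0 \<le> uniform_variance (e i)" if "i \<in> A" for i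
    using uniform_variance_mono[of 1 "e i"] assms(2)[OF that] by (simp add: uniform_variance_def)
  have "norm ((\<Prod>i\<in>A. char_centred_uniform (e i) s)
      - (\<Prod>i\<in>A. complex_of_real (1 - s\<^sup>2 * uniform_variance (e i) / 2)))
    \<le> (\<Sum>i\<in>A. norm (char_centred_uniform (e i) s - complex_of_real (1 - s\<^sup>2 * uniform_variance (e i) / 2)))"
  proof (rule norm_prod_diff)
    fix i assume i: "i \<in> A"
    then show "norm (char_centred_uniform (e i) s) \<le> 1"
      using assms(2) by (intro norm_char_centred_uniform_le_1) simp
    have "0 \<le> s\<^sup>2 * uniform_variance (e i)" using var_nonneg[OF i] by simp
    then show "norm (complex_of_real (1 - s\<^sup>2 * uniform_variance (e i) / 2)) \<le> 1"
      unfolding norm_of_real using assms(3)[OF i] by (simp add: abs_le_iff)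
  qed
  also have "\<dots> \<le> (\<Sum>i\<in>A. \<bar>s\<bar>^3 * real_of_int E * uniform_variance (e i) / 12)"
  proof (rule sum_mono)
    fix i assume i: "i \<in> A"
    have "norm (char_centred_uniform (e i) s - complex_of_real (1 - s\<^sup>2 * uniform_variance (e i) / 2))
        \<le> \<bar>s\<bar>^3 * real_of_int (e i) * uniform_variance (e i) / 12"
      using assms(2)[OF i] by (intro char_centred_uniform_quadratic_approx) simp
    also have "\<dots> \<le> \<bar>s\<bar>^3 * real_of_int E * uniform_variance (e i) / 12"
      using assms(2)[OF i] var_nonneg[OF i]
      by (intro divide_right_mono mult_right_mono mult_left_mono) auto
    finally show "norm (char_centred_uniform (e i) s - complex_of_real (1 - s\<^sup>2 * uniform_variance (e i) / 2))
        \<le> \<bar>s\<bar>^3 * real_of_int E * uniform_variance (e i) / 12" .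
  qed
  also have "\<dots> = \<bar>s\<bar>^3 * real_of_int E * (\<Sum>i\<in>A. uniform_variance (e i)) / 12"
    by (simp add: sum_divide_distrib[symmetric] sum_distrib_left[symmetric])
  finally show ?thesis .
qed

section \<open>Triangular arrays\<close>

lemma subseq_tendsto_pos_if_not_tendsto_0:
  fixes f :: "nat \<Rightarrow> real"
  assumes bounds: "\<And>n. 0 \<le> f n \<and> f n \<le> B" and not_0: "\<not> f \<longlonglongrightarrow> 0"
  obtains m c where "strict_mono m" "0 < c" "(\<lambda>k. f (m k)) \<longlonglongrightarrow> c" "\<And>k. 0 < f (m k)"
proof -
  obtain e where e: "0 < e" "\<not> (\<forall>\<^sub>F n in sequentially. dist (f n) 0 < e)"
    using not_0 unfolding tendsto_iff by blast
  then have "\<exists>\<^sub>F n in sequentially. e \<le> f n"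
    using bounds by (simp add: not_eventually not_less)
  then have inf: "infinite {n. e \<le> f n}"
    by (simp add: frequently_cofinite[symmetric] cofinite_eq_sequentially)
  define g where "g = enumerate {n. e \<le> f n}"
  have g: "strict_mono g" "\<And>k. e \<le> f (g k)"
    unfolding g_def using inf enumerate_in_set[OF inf] by (auto simp: strict_mono_enumerate)
  have "seq_compact {e..B}" by (rule compact_imp_seq_compact) simp
  moreover have "\<forall>k. (f \<circ> g) k \<in> {e..B}" using g bounds by auto
  ultimately obtain c h where c: "c \<in> {e..B}" and h: "strict_mono h" "((f \<circ> g) \<circ> h) \<longlonglongrightarrow> c"
    by (rule seq_compactE)
  show thesis
  proof (rule that)
    show "strict_mono (g \<circ> h)" using g(1) h(1) by (rule strict_mono_o)
  qed (use c h g e in \<open>auto simp: comp_def intro: less_le_trans\<close>)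
qed

lemma le_if_Suc_le_on_interval:
  fixes f :: "nat \<Rightarrow> 'a::order"
  assumes step: "\<And>k. 1 \<le> k \<Longrightarrow> k < n \<Longrightarrow> f k \<le> f (Suc k)"
    and "1 \<le> i" "i \<le> j" "j \<le> n"
  shows "f i \<le> f j"
  using assms(3,4)
proof (induction j rule: dec_induct)
  case (step k)
  have "f i \<le> f k" using step by simp
  also have "f k \<le> f (Suc k)" using step.hyps step.prems assms(2) by (intro assms(1)) auto
  finally show ?case .
qed simp

lemma weak_conv_m_iff_tendsto_char:
  assumes F: "\<And>n. 1 \<le> n \<Longrightarrow> real_distribution (F n)" and N: "real_distribution N"
  shows "weak_conv_m F N \<longleftrightarrow> (\<forall>t. (\<lambda>n. char (F n) t) \<longlonglongrightarrow> char N t)"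
proof -
  have F_Suc: "real_distribution (F (Suc n))" for n by (rule F) simp
  have "weak_conv_m F N \<longleftrightarrow> weak_conv_m (\<lambda>n. F (Suc n)) N"
    unfolding weak_conv_m_def weak_conv_def
    using filterlim_sequentially_Suc[where f="\<lambda>n. cdf (F n) x" for x] by simp
  also have "\<dots> \<longleftrightarrow> (\<forall>t. (\<lambda>n. char (F (Suc n)) t) \<longlonglongrightarrow> char N t)"
    using levy_continuity[where M="\<lambda>n. F (Suc n)", OF F_Suc N]
      levy_continuity1[where M="\<lambda>n. F (Suc n)", OF F_Suc N] by blast
  also have "\<dots> \<longleftrightarrow> (\<forall>t. (\<lambda>n. char (F n) t) \<longlonglongrightarrow> char N t)"
    using filterlim_sequentially_Suc[where f="\<lambda>n. char (F n) t" for t] by simp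
  finally show ?thesis .
qed

locale uniform_ranges =
  fixes d :: "nat \<Rightarrow> nat \<Rightarrow> int"
  assumes range_bounds: "\<And>n i. i \<in> {1..n} \<Longrightarrow> 2 \<le> d n i \<and> d n i \<le> d n n"
begin

definition row_variance :: "nat \<Rightarrow> real" where
  "row_variance n = (\<Sum>i\<in>{1..n}. uniform_variance (d n i))"

text \<open>Since the ranges increase along each row, this is the ratio in the maximum condition.\<close>
definition max_ratio :: "nat \<Rightarrow> real" where
  "max_ratio n = uniform_variance (d n n) / row_variance n"

definition row_char :: "nat \<Rightarrow> real \<Rightarrow> complex" where
  "row_char n t = (\<Prod>i\<in>{1..n}. char_centred_uniform (d n i) (t / sqrt (row_variance n)))"

lemma row_variance_ge: "real n / 4 \<le> row_variance n"
proof -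
  have "real n / 4 = (\<Sum>i\<in>{1..n}. 1/4)" by simp
  also have "\<dots> \<le> row_variance n"
    unfolding row_variance_def using range_bounds uniform_variance_ge by (intro sum_mono) blast
  finally show ?thesis .
qed

lemma row_variance_pos: "1 \<le> n \<Longrightarrow> 0 < row_variance n"
  using row_variance_ge[of n] by linarith

lemma max_ratio_bounds: "0 \<le> max_ratio n \<and> max_ratio n \<le> 1"
proof (cases "n = 0")
  case True
  then show ?thesis by (simp add: max_ratio_def row_variance_def)
next
  case False
  then have n: "n \<in> {1..n}" by simp
  have nonneg: "\<forall>i\<in>{1..n}. 0 \<le> uniform_variance (d n i)"
    using range_bounds uniform_variance_ge by (meson order_trans zero_le_divide_iff zero_le_one zero_le_numeral)
  then have "uniform_variance (d n n) \<le> row_variance n"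
    unfolding row_variance_def using n by (intro member_le_sum) auto
  then show ?thesis
    using nonneg n row_variance_pos[of n] unfolding max_ratio_def by (simp add: divide_le_eq_1)
qed

lemma inverse_row_variance_tendsto_0: "(\<lambda>n. 1 / row_variance n) \<longlonglongrightarrow> 0"
proof (rule Lim_null_comparison)
  show "\<forall>\<^sub>F n in sequentially. norm (1 / row_variance n) \<le> 4 * (1 / real n)"
    using eventually_ge_at_top[of 1]
  proof eventually_elim
    case (elim n)
    then show ?case using row_variance_ge[of n] row_variance_pos[of n] by (simp add: field_simps)
  qed
  show "(\<lambda>n. 4 * (1 / real n)) \<longlonglongrightarrow> 0"
    by (intro tendsto_mult_right_zero lim_const_over_n)
qed

lemma max_range_div_sqrt_row_variance:
  assumes "1 \<le> n"
  shows "real_of_int (d n n) / sqrt (row_variance n) = sqrt (12 * max_ratio n + 1 / row_variance n)"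
proof -
  have "12 * max_ratio n + 1 / row_variance n = (real_of_int (d n n))\<^sup>2 / row_variance n"
    unfolding max_ratio_def uniform_variance_def using row_variance_pos[OF assms] by (simp add: field_simps)
  moreover have "0 \<le> d n n" using range_bounds[of n n] assms by simp
  ultimately show ?thesis by (simp add: real_sqrt_divide)
qed

text \<open>Lindeberg's comparison: replace each factor first by its second order Taylor
  polynomial 1 - a i and then 1 - a i by exp (- a i).\<close>
lemma row_char_approx:
  assumes n: "1 \<le> n" and small: "t\<^sup>2 * max_ratio n \<le> 2"
  shows "norm (row_char n t - complex_of_real (exp (- t\<^sup>2 / 2)))
    \<le> \<bar>t\<bar>^3 / 12 * (real_of_int (d n n) / sqrt (row_variance n)) + t^4 / 4 * max_ratio n"
proof -
  define V where "V = row_variance n"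
  define s where "s = t / sqrt V"
  define a where "a i = s\<^sup>2 * uniform_variance (d n i) / 2" for i
  have V: "0 < V" unfolding V_def using row_variance_pos[OF n] .
  have s2: "s\<^sup>2 = t\<^sup>2 / V" unfolding s_def using V by (simp add: power_divide)
  have a_n: "a n = t\<^sup>2 * max_ratio n / 2"
    unfolding a_def s2 max_ratio_def V_def by simp
  have a_n_le_1: "a n \<le> 1" using a_n small by simp
  have a_bounds: "0 \<le> a i \<and> a i \<le> a n" if "i \<in> {1..n}" for i
    unfolding a_def using range_bounds[OF that] uniform_variance_ge[of "d n i"]
    by (auto intro!: divide_right_mono mult_left_mono uniform_variance_mono)
  have "(\<Sum>i\<in>{1..n}. a i) = s\<^sup>2 / 2 * V"
    unfolding a_def V_def row_variance_def by (simp add: sum_distrib_left sum_divide_distrib)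
  then have sum_a: "(\<Sum>i\<in>{1..n}. a i) = t\<^sup>2 / 2" using V by (simp add: s2)
  have "norm ((\<Prod>i\<in>{1..n}. char_centred_uniform (d n i) s) - (\<Prod>i\<in>{1..n}. complex_of_real (1 - a i)))
      \<le> \<bar>s\<bar>^3 * real_of_int (d n n) * (\<Sum>i\<in>{1..n}. uniform_variance (d n i)) / 12"
    unfolding a_def
  proof (rule norm_prod_char_centred_uniform_approx)
    fix i assume i: "i \<in> {1..n}"
    then show "1 \<le> d n i \<and> d n i \<le> d n n" using range_bounds by force
    show "s\<^sup>2 * uniform_variance (d n i) \<le> 2"
      using a_bounds[OF i] a_n small unfolding a_def by simp
  qed simp
  then have "norm (row_char n t - (\<Prod>i\<in>{1..n}. complex_of_real (1 - a i)))
      \<le> \<bar>s\<bar>^3 * real_of_int (d n n) * V / 12"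
    unfolding row_char_def s_def V_def row_variance_def .
  also have "\<bar>s\<bar>^3 * real_of_int (d n n) * V / 12 = \<bar>t\<bar>^3 / 12 * (real_of_int (d n n) / sqrt V)"
    unfolding s_def using V
    by (simp add: abs_divide power_divide power3_eq_cube field_simps)
  finally have taylor: "norm (row_char n t - complex_of_real (\<Prod>i\<in>{1..n}. 1 - a i))
      \<le> \<bar>t\<bar>^3 / 12 * (real_of_int (d n n) / sqrt (row_variance n))"
    unfolding V_def by simp
  have "\<bar>(\<Prod>i\<in>{1..n}. 1 - a i) - exp (- (t\<^sup>2 / 2))\<bar> \<le> a n * (t\<^sup>2 / 2)"
    unfolding sum_a[symmetric]
    by (rule abs_prod_one_minus_minus_exp_sum_le) (use a_bounds a_n_le_1 in auto)
  also have "\<dots> = t^4 / 4 * max_ratio n"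
    unfolding a_n by (simp add: power4_eq_xxxx power2_eq_square)
  finally have exponential: "norm (complex_of_real (\<Prod>i\<in>{1..n}. 1 - a i) - complex_of_real (exp (- t\<^sup>2 / 2)))
      \<le> t^4 / 4 * max_ratio n"
    unfolding of_real_diff[symmetric] norm_of_real by simp
  from taylor exponential show ?thesis by (rule norm_diff_triangle_le)
qed

lemma row_char_tendsto_normal:
  assumes "max_ratio \<longlonglongrightarrow> 0"
  shows "(\<lambda>n. row_char n t) \<longlonglongrightarrow> complex_of_real (exp (- t\<^sup>2 / 2))"
proof (rule LIM_zero_cancel, rule Lim_null_comparison)
  define B where "B n = \<bar>t\<bar>^3 / 12 * sqrt (12 * max_ratio n + 1 / row_variance n) + t^4 / 4 * max_ratio n" for n
  have "(\<lambda>n. sqrt (12 * max_ratio n + 1 / row_variance n)) \<longlonglongrightarrow> sqrt (12 * 0 + 0)"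
    by (intro tendsto_intros assms inverse_row_variance_tendsto_0)
  then have "B \<longlonglongrightarrow> \<bar>t\<bar>^3 / 12 * 0 + t^4 / 4 * 0"
    unfolding B_def by (intro tendsto_intros assms) simp
  then show "B \<longlonglongrightarrow> 0" by simp
  have "(\<lambda>n. t\<^sup>2 * max_ratio n) \<longlonglongrightarrow> t\<^sup>2 * 0" by (intro tendsto_intros assms)
  then have "\<forall>\<^sub>F n in sequentially. t\<^sup>2 * max_ratio n < 2" by (rule order_tendstoD(2)) simp
  then show "\<forall>\<^sub>F n in sequentially. norm (row_char n t - complex_of_real (exp (- t\<^sup>2 / 2))) \<le> B n"
    using eventually_ge_at_top[of 1]
  proof eventually_elim
    case (elim n)
    then show ?case
      using row_char_approx[of n t] unfolding B_def max_range_div_sqrt_row_variance[OF elim(2)] by simp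
  qed
qed

text \<open>If the largest range d n n is comparable to the standard deviation, its factor
  nearly completes a full turn of the unit circle at t = 2 pi / sqrt (12 c), and then
  its geometric sum cancels out.\<close>
lemma row_char_vanishes:
  assumes m: "strict_mono m" "\<And>k. 1 \<le> m k" and c: "(\<lambda>k. max_ratio (m k)) \<longlonglongrightarrow> c" "0 < c"
  defines "t \<equiv> 2 * pi / sqrt (12 * c)"
  shows "(\<lambda>k. row_char (m k) t) \<longlonglongrightarrow> 0"
proof (rule Lim_null_comparison)
  define s where "s k = t / sqrt (row_variance (m k))" for k
  define x where "x k = real_of_int (d (m k) (m k)) * s k" for k
  have t: "0 < t" unfolding t_def using c by simp
  have inv_V: "(\<lambda>k. 1 / row_variance (m k)) \<longlonglongrightarrow> 0"
    using LIMSEQ_subseq_LIMSEQ[OF inverse_row_variance_tendsto_0 m(1)] by (simp add: comp_def)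
  have "(\<lambda>k. t * sqrt (1 / row_variance (m k))) \<longlonglongrightarrow> t * sqrt 0"
    by (intro tendsto_intros inv_V)
  then have s: "s \<longlonglongrightarrow> 0"
    unfolding s_def by (simp add: real_sqrt_divide)
  have "(\<lambda>k. t * sqrt (12 * max_ratio (m k) + 1 / row_variance (m k))) \<longlonglongrightarrow> t * sqrt (12 * c + 0)"
    by (intro tendsto_intros c inv_V)
  moreover have "t * sqrt (12 * c) = 2 * pi" unfolding t_def using c by simp
  moreover have "x = (\<lambda>k. t * sqrt (12 * max_ratio (m k) + 1 / row_variance (m k)))"
    unfolding x_def s_def max_range_div_sqrt_row_variance[OF m(2), symmetric] by auto
  ultimately have x: "x \<longlonglongrightarrow> 2 * pi" by simp
  have "(\<lambda>k. 2 * cmod (1 - iexp (x k)) / \<bar>x k\<bar>) \<longlonglongrightarrow> 2 * cmod (1 - iexp (2 * pi)) / \<bar>2 * pi\<bar>"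
    by (intro tendsto_intros x) simp
  moreover have "iexp (2 * pi) = 1"
    using exp_two_pi_i by (simp add: mult_ac)
  ultimately show "(\<lambda>k. 2 * cmod (1 - iexp (x k)) / \<bar>x k\<bar>) \<longlonglongrightarrow> 0" by simp
  have "\<forall>\<^sub>F k in sequentially. \<bar>s k\<bar> < 1"
    using s by (rule order_tendstoD(2)[OF tendsto_rabs_zero]) simp
  then show "\<forall>\<^sub>F k in sequentially. norm (row_char (m k) t) \<le> 2 * cmod (1 - iexp (x k)) / \<bar>x k\<bar>"
  proof eventually_elim
    case (elim k)
    let ?n = "m k"
    have n: "?n \<in> {1..?n}" using m(2)[of k] by simp
    have D: "1 \<le> d ?n ?n" using range_bounds[OF n] by simp
    have "s k \<noteq> 0" unfolding s_def using t row_variance_pos[OF m(2)[of k]] by simp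
    have "norm (row_char ?n t) \<le> norm (char_centred_uniform (d ?n ?n) (s k))"
      unfolding row_char_def s_def
      using n range_bounds by (intro norm_prod_le_norm_factor norm_char_centred_uniform_le_1) force+
    also have "\<dots> \<le> 2 * cmod (1 - iexp (x k)) / \<bar>x k\<bar>"
      using norm_char_centred_uniform_le[OF D \<open>s k \<noteq> 0\<close>] elim D
      unfolding x_def by (simp add: abs_mult)
    finally show ?case .
  qed
qed

lemma max_ratio_tendsto_0:
  assumes normal: "\<And>t. (\<lambda>n. row_char n t) \<longlonglongrightarrow> complex_of_real (exp (- t\<^sup>2 / 2))"
  shows "max_ratio \<longlonglongrightarrow> 0"
proof (rule ccontr)
  assume "\<not> max_ratio \<longlonglongrightarrow> 0"
  then obtain m c where m: "strict_mono m" "0 < c" "(\<lambda>k. max_ratio (m k)) \<longlonglongrightarrow> c"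
    and pos: "\<And>k. 0 < max_ratio (m k)"
    using subseq_tendsto_pos_if_not_tendsto_0[of max_ratio 1] max_ratio_bounds by blast
  have "1 \<le> m k" for k
    using pos[of k] by (cases "m k") (auto simp: max_ratio_def row_variance_def)
  define t where "t = 2 * pi / sqrt (12 * c)"
  have "(\<lambda>k. row_char (m k) t) \<longlonglongrightarrow> 0"
    unfolding t_def using m \<open>\<And>k. 1 \<le> m k\<close> by (intro row_char_vanishes)
  moreover have "(\<lambda>k. row_char (m k) t) \<longlonglongrightarrow> complex_of_real (exp (- t\<^sup>2 / 2))"
    using LIMSEQ_subseq_LIMSEQ[OF normal m(1)] by (simp add: comp_def)
  ultimately show False
    using LIMSEQ_unique by fastforce
qed

end

lemma uniform_rangesI:
  assumes "\<And>n. 1 \<le> n \<Longrightarrow> 2 \<le> d n 1" and "\<And>n i. 1 \<le> i \<Longrightarrow> i < n \<Longrightarrow> d n i \<le> d n (Suc i)"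
  shows "uniform_ranges d"
proof
  fix n i :: nat assume i: "i \<in> {1..n}"
  have "d n 1 \<le> d n i" by (rule le_if_Suc_le_on_interval[of n]) (use assms(2) i in auto)
  moreover have "d n i \<le> d n n" by (rule le_if_Suc_le_on_interval[of n]) (use assms(2) i in auto)
  ultimately show "2 \<le> d n i \<and> d n i \<le> d n n" using assms(1)[of n] i by simp
qed

locale uniform_array = uniform_ranges d for d :: "nat \<Rightarrow> nat \<Rightarrow> int" +
  fixes M :: "nat \<Rightarrow> 'a measure" and X :: "nat \<Rightarrow> nat \<Rightarrow> 'a \<Rightarrow> int"
  assumes prob: "\<And>n. 1 \<le> n \<Longrightarrow> prob_space (M n)"
    and indep: "\<And>n. 1 \<le> n \<Longrightarrow> prob_space.indep_vars (M n) (\<lambda>_. count_space UNIV) (X n) {1..n}"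
    and unif: "\<And>n i. 1 \<le> i \<Longrightarrow> i \<le> n \<Longrightarrow>
          distr (M n) (count_space UNIV) (X n i) = measure_pmf (pmf_of_set {0..<d n i})"
begin

lemma uniform_row: "1 \<le> n \<Longrightarrow> uniform_row (M n) (X n) (d n) n"
proof (intro uniform_row.intro uniform_row_axioms.intro)
  assume n: "1 \<le> n"
  show "prob_space (M n)" using prob n .
  show "prob_space.indep_vars (M n) (\<lambda>_. count_space UNIV) (X n) {1..n}" using indep n .
  fix i assume i: "i \<in> {1..n}"
  then show "distr (M n) (count_space UNIV) (X n i) = measure_pmf (pmf_of_set {0..<d n i})"
    using unif by simp
  show "1 \<le> d n i" using range_bounds[OF i] by simp
qed

lemma satisfies_CLT_iff_row_char_tendsto:
  "satisfies_CLT M (\<lambda>n \<omega>. \<Sum>i\<in>{1..n}. real_of_int (X n i \<omega>))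
    \<longleftrightarrow> (\<forall>t. (\<lambda>n. row_char n t) \<longlonglongrightarrow> complex_of_real (exp (- t\<^sup>2 / 2)))"
proof -
  define F where "F n = distr (M n) borel (\<lambda>\<omega>. ((\<Sum>i\<in>{1..n}. real_of_int (X n i \<omega>))
      - prob_space.expectation (M n) (\<lambda>\<omega>. \<Sum>i\<in>{1..n}. real_of_int (X n i \<omega>)))
      / sqrt (prob_space.variance (M n) (\<lambda>\<omega>. \<Sum>i\<in>{1..n}. real_of_int (X n i \<omega>))))" for n
  have char_F: "\<forall>\<^sub>F n in sequentially. char (F n) t = row_char n t" for t
    using eventually_ge_at_top[of 1]
  proof eventually_elim
    case (elim n)
    show ?case unfolding F_def row_char_def row_variance_def
      by (rule uniform_row.char_standardized_row_sum[OF uniform_row[OF elim]])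
  qed
  have "satisfies_CLT M (\<lambda>n \<omega>. \<Sum>i\<in>{1..n}. real_of_int (X n i \<omega>))
      \<longleftrightarrow> (\<forall>t. (\<lambda>n. char (F n) t) \<longlonglongrightarrow> char std_normal_distribution t)"
    unfolding satisfies_CLT_def F_def[symmetric]
  proof (rule weak_conv_m_iff_tendsto_char[OF _ real_dist_normal_dist])
    show "real_distribution (F n)" if "1 \<le> n" for n
      unfolding F_def by (rule uniform_row.real_distribution_standardized_row_sum[OF uniform_row[OF that]])
  qed
  also have "\<dots> \<longleftrightarrow> (\<forall>t. (\<lambda>n. row_char n t) \<longlonglongrightarrow> complex_of_real (exp (- t\<^sup>2 / 2)))"
    unfolding char_std_normal_distribution using tendsto_cong[OF char_F] by simp
  finally show ?thesis .
qed

lemma maximum_condition_iff_max_ratio_tendsto_0: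
  "maximum_condition M (\<lambda>n i \<omega>. real_of_int (X n i \<omega>)) \<longleftrightarrow> max_ratio \<longlonglongrightarrow> 0"
proof -
  have "\<forall>\<^sub>F n in sequentially. max_ratio n =
      (MAX i\<in>{1..n}. prob_space.variance (M n) (\<lambda>\<omega>. real_of_int (X n i \<omega>)))
        / prob_space.variance (M n) (\<lambda>\<omega>. \<Sum>i\<in>{1..n}. real_of_int (X n i \<omega>))"
    using eventually_ge_at_top[of 1]
  proof eventually_elim
    case (elim n)
    have "(MAX i\<in>{1..n}. prob_space.variance (M n) (\<lambda>\<omega>. real_of_int (X n i \<omega>)))
        = uniform_variance (d n n)"
      using range_bounds by (intro uniform_row.Max_variance_X[OF uniform_row[OF elim] elim]) simp
    then show ?case
      unfolding max_ratio_def row_variance_def uniform_row.variance_row_sum[OF uniform_row[OF elim]]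
      by simp
  qed
  then show ?thesis unfolding maximum_condition_def by (rule tendsto_cong[symmetric])
qed

end

theorem proposition6p12:
  fixes M :: "nat \<Rightarrow> 'a measure"
    and X :: "nat \<Rightarrow> nat \<Rightarrow> 'a \<Rightarrow> int"
    and d :: "nat \<Rightarrow> nat \<Rightarrow> int"
  assumes d_ge2: "\<And>n. n \<ge> 1 \<Longrightarrow> 2 \<le> d n 1"
    and d_mono: "\<And>n i. 1 \<le> i \<Longrightarrow> i < n \<Longrightarrow> d n i \<le> d n (Suc i)"
    and prob: "\<And>n. n \<ge> 1 \<Longrightarrow> prob_space (M n)"
    and indep: "\<And>n. n \<ge> 1 \<Longrightarrow>
                  prob_space.indep_vars (M n) (\<lambda>_. count_space UNIV) (X n) {1..n}"
    and unif: "\<And>n i. 1 \<le> i \<Longrightarrow> i \<le> n \<Longrightarrow>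
                  distr (M n) (count_space UNIV) (X n i) = measure_pmf (pmf_of_set {0..<d n i})"
  shows "satisfies_CLT M (\<lambda>n \<omega>. \<Sum>i\<in>{1..n}. real_of_int (X n i \<omega>)) \<longleftrightarrow>
         maximum_condition M (\<lambda>n i \<omega>. real_of_int (X n i \<omega>))"
proof -
  interpret uniform_array d M X
    using d_ge2 d_mono prob indep unif
    by (intro uniform_array.intro uniform_array_axioms.intro uniform_rangesI) auto
  show ?thesis
    unfolding satisfies_CLT_iff_row_char_tendsto maximum_condition_iff_max_ratio_tendsto_0
    using row_char_tendsto_normal max_ratio_tendsto_0 by blast
qed

end
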